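(* There exists $N$ such that for all integers $n\geq N$, $$t(n,2)\geq n\log_2 n-4n\log_2\log_2 n-2n.$$
   Context: All graphs are finite, simple and undirected. In an edge-colored graph (adjacent edges may receive the same color), a path is a rainbow path if no two of its edges have the same color. A graph $G$ is $d$-rainbow connected if there is an edge-coloring of $G$ using $d$ colors such that every two distinct vertices of $G$ are joined by a rainbow path. For positive integers $n$ and $d$, $t(n,d)$ denotes the minimum number of edges of a $d$-rainbow connected graph on $n$ vertices. *)

theory Defs
  imports Complex_Main
begin

definition simple_graph :: "'a set \<Rightarrow> 'a set set \<Rightarrow> bool" where
  "simple_graph V E \<longleftrightarrow> finite V \<and> (\<forall>e\<in>E. e \<subseteq> V \<and> card e = 2)"

definition path_edges :: "'a list \<Rightarrow> 'a set list" where
  "path_edges p = map (\<lambda>i. {p ! i, p ! Suc i}) [0..<length p - 1]"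

definition rainbow_path :: "'a set set \<Rightarrow> ('a set \<Rightarrow> 'c) \<Rightarrow> 'a list \<Rightarrow> 'a \<Rightarrow> 'a \<Rightarrow> bool" where
  "rainbow_path E c p u v \<longleftrightarrow>
     p \<noteq> [] \<and> hd p = u \<and> last p = v \<and> distinct p \<and>
     set (path_edges p) \<subseteq> E \<and> distinct (map c (path_edges p))"

definition rainbow_connected :: "nat \<Rightarrow> 'a set \<Rightarrow> 'a set set \<Rightarrow> bool" where
  "rainbow_connected d V E \<longleftrightarrow>
     (\<exists>c :: 'a set \<Rightarrow> nat. c ` E \<subseteq> {..<d} \<and>
        (\<forall>u\<in>V. \<forall>v\<in>V. u \<noteq> v \<longrightarrow> (\<exists>p. rainbow_path E c p u v)))"

text \<open>t(n,d): minimum number of edges of a d-rainbow connected graph on n vertices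
 (vertex set taken to be {0..<n} without loss of generality).\<close>
definition t :: "nat \<Rightarrow> nat \<Rightarrow> nat" where
  "t n d = Min {card E | E. simple_graph {0..<n} E \<and> rainbow_connected d {0..<n} E}"

end

theory Submission
  imports Defs
begin

text \<open>In a 2-rainbow connected graph every pair of vertices is adjacent or joined by a
  path of length two whose edges have different colours. Split the vertices into the set L
  of vertices of degree at most K = 3/4 (log n)^2 and the rest H. For T \<subseteq> H, the vertices
  v \<in> L whose colour-0 neighbours in H are exactly the H-neighbours of v inside T cannot be
  joined through H, so they all lie in a ball of radius two in the graph induced by L and
  there are at most 1 + K + K^2 of them. Double counting over all T gives
  \<Sum>v\<in>L. 2^(-deg_H v) \<le> 1 + K + K^2, and by convexity of 2^(-x) the edges between L and H
  number at least |L| log(|L| / (1 + K + K^2)). Together with the |H| K / 2 edges at H this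
  yields the bound.\<close>

definition nbrs :: "'a set set \<Rightarrow> 'a set \<Rightarrow> 'a \<Rightarrow> 'a set" where
  "nbrs E A v = {w\<in>A. {v, w} \<in> E}"

definition rainbow_diameter_two :: "'a set \<Rightarrow> 'a set set \<Rightarrow> ('a set \<Rightarrow> 'c) \<Rightarrow> bool" where
  "rainbow_diameter_two V E c \<longleftrightarrow>
     (\<forall>u\<in>V. \<forall>v\<in>V. u \<noteq> v \<longrightarrow>
        {u, v} \<in> E \<or> (\<exists>w. {u, w} \<in> E \<and> {w, v} \<in> E \<and> c {u, w} \<noteq> c {w, v}))"

definition colour_pattern :: "'a set set \<Rightarrow> ('a set \<Rightarrow> nat) \<Rightarrow> 'a set \<Rightarrow> 'a \<Rightarrow> 'a set \<Rightarrow> bool" where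
  "colour_pattern E c H v T \<longleftrightarrow> (\<forall>w\<in>nbrs E H v. w \<in> T \<longleftrightarrow> c {v, w} = 0)"

lemma card_Pow_prescribed_on:
  assumes "finite H" "A \<subseteq> H"
  shows "card {T\<in>Pow H. \<forall>w\<in>A. w \<in> T \<longleftrightarrow> P w} = 2 ^ (card H - card A)"
proof -
  have "bij_betw (\<lambda>T. T - A) {T\<in>Pow H. \<forall>w\<in>A. w \<in> T \<longleftrightarrow> P w} (Pow (H - A))"
    by (rule bij_betw_byWitness[where f'="\<lambda>U. U \<union> {w\<in>A. P w}"]) (use assms in auto)
  then have "card {T\<in>Pow H. \<forall>w\<in>A. w \<in> T \<longleftrightarrow> P w} = card (Pow (H - A))"
    by (rule bij_betw_same_card)
  also have "\<dots> = 2 ^ (card H - card A)"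
    using assms by (simp add: card_Pow card_Diff_subset finite_subset)
  finally show ?thesis .
qed

lemma sum_card_filter_swap:
  assumes "finite A" "finite B"
  shows "(\<Sum>y\<in>B. card {x\<in>A. Q x y}) = (\<Sum>x\<in>A. card {y\<in>B. Q x y})"
proof -
  have "(\<Sum>y\<in>B. card {x\<in>A. Q x y}) = (\<Sum>y\<in>B. \<Sum>x\<in>A. if Q x y then 1 else 0)"
    using assms by (simp add: sum.If_cases Int_def conj_commute)
  also have "\<dots> = (\<Sum>x\<in>A. \<Sum>y\<in>B. if Q x y then 1 else 0)" by (rule sum.swap)
  also have "\<dots> = (\<Sum>x\<in>A. card {y\<in>B. Q x y})"
    using assms by (simp add: sum.If_cases Int_def conj_commute)
  finally show ?thesis .
qed

lemma sum_card_nbrs_le_card_edges: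
  assumes "finite L" "finite H" "L \<inter> H = {}" "finite E"
  shows "(\<Sum>v\<in>L. card (nbrs E H v)) \<le> card E"
proof -
  have "(\<Sum>v\<in>L. card (nbrs E H v)) = card (SIGMA v:L. nbrs E H v)"
    using assms by (simp add: card_SigmaI nbrs_def)
  also have "\<dots> \<le> card E"
  proof (rule card_inj_on_le[where f="\<lambda>(v, w). {v, w}"])
    show "inj_on (\<lambda>(v, w). {v, w}) (SIGMA v:L. nbrs E H v)"
      using assms(3) by (auto simp: inj_on_def nbrs_def doubleton_eq_iff)
  qed (use assms in \<open>auto simp: nbrs_def\<close>)
  finally show ?thesis .
qed

lemma sum_card_nbrs_le_twice_card_edges:
  fixes E :: "'a::linorder set set"
  assumes "finite A" "finite V" "finite E"
  shows "(\<Sum>v\<in>A. card (nbrs E V v)) \<le> 2 * card E"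
proof -
  have "(\<Sum>v\<in>A. card (nbrs E V v)) = card (SIGMA v:A. nbrs E V v)"
    using assms by (simp add: card_SigmaI nbrs_def)
  also have "\<dots> \<le> card (E \<times> (UNIV :: bool set))"
  proof (rule card_inj_on_le[where f="\<lambda>(v, w). ({v, w}, v < w)"])
    show "inj_on (\<lambda>(v, w). ({v, w}, v < w)) (SIGMA v:A. nbrs E V v)"
      by (auto simp: inj_on_def nbrs_def doubleton_eq_iff)
  qed (use assms in \<open>auto simp: nbrs_def\<close>)
  also have "\<dots> = 2 * card E" by (simp add: card_cartesian_product)
  finally show ?thesis .
qed

lemma card_mult_le_twice_card_edges:
  fixes E :: "'a::linorder set set"
  assumes "finite A" "finite V" "finite E" and deg: "\<And>v. v \<in> A \<Longrightarrow> K \<le> real (card (nbrs E V v))"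
  shows "real (card A) * K \<le> 2 * real (card E)"
proof -
  have "real (card A) * K = (\<Sum>v\<in>A. K)" by simp
  also have "\<dots> \<le> (\<Sum>v\<in>A. real (card (nbrs E V v)))" by (intro sum_mono deg)
  also have "\<dots> \<le> 2 * real (card E)"
    using sum_card_nbrs_le_twice_card_edges[OF assms(1-3)] by (simp flip: of_nat_sum)
  finally show ?thesis .
qed

lemma card_ball2_le:
  assumes "finite L" "v \<in> L" and deg: "\<And>x. x \<in> L \<Longrightarrow> real (card (nbrs E L x)) \<le> K"
  shows "real (card (insert v (nbrs E L v \<union> (\<Union>w\<in>nbrs E L v. nbrs E L w)))) \<le> 1 + K + K\<^sup>2"
proof -
  have fin: "finite (nbrs E L x)" for x using assms(1) by (simp add: nbrs_def)
  have "card (insert v (nbrs E L v \<union> (\<Union>w\<in>nbrs E L v. nbrs E L w)))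
      \<le> 1 + card (nbrs E L v \<union> (\<Union>w\<in>nbrs E L v. nbrs E L w))"
    by (simp add: card_insert_le_m1 card_insert_if)
  also have "\<dots> \<le> 1 + card (nbrs E L v) + card (\<Union>w\<in>nbrs E L v. nbrs E L w)"
    using card_Un_le by simp
  also have "\<dots> \<le> 1 + card (nbrs E L v) + (\<Sum>w\<in>nbrs E L v. card (nbrs E L w))"
    using card_UN_le[OF fin] by simp
  finally have "card (insert v (nbrs E L v \<union> (\<Union>w\<in>nbrs E L v. nbrs E L w)))
      \<le> 1 + card (nbrs E L v) + (\<Sum>w\<in>nbrs E L v. card (nbrs E L w))" .
  then have "real (card (insert v (nbrs E L v \<union> (\<Union>w\<in>nbrs E L v. nbrs E L w))))
      \<le> 1 + real (card (nbrs E L v)) + (\<Sum>w\<in>nbrs E L v. real (card (nbrs E L w)))"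
    by (metis of_nat_1 of_nat_add of_nat_le_iff of_nat_sum)
  also have "(\<Sum>w\<in>nbrs E L v. real (card (nbrs E L w))) \<le> real (card (nbrs E L v)) * K"
    using sum_mono[of "nbrs E L v" "\<lambda>w. real (card (nbrs E L w))" "\<lambda>_. K"] deg
    by (auto simp: nbrs_def)
  also have "real (card (nbrs E L v)) * K \<le> K * K"
    using deg[OF assms(2)] by (simp add: mult_right_mono order_trans[OF of_nat_0_le_iff])
  finally show ?thesis using deg[OF assms(2)] by (simp add: power2_eq_square)
qed

lemma rainbow_path_two_colours:
  fixes c :: "'a set \<Rightarrow> nat"
  assumes rp: "rainbow_path E c p u v" and col: "c ` E \<subseteq> {..<2}" and uv: "u \<noteq> v"
  shows "{u, v} \<in> E \<or> (\<exists>w. {u, w} \<in> E \<and> {w, v} \<in> E \<and> c {u, w} \<noteq> c {w, v})"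
proof -
  have ne: "p \<noteq> []" and hd: "hd p = u" and last: "last p = v"
    and edges: "set (path_edges p) \<subseteq> E" and dc: "distinct (map c (path_edges p))"
    using rp by (auto simp: rainbow_path_def)
  have "set (map c (path_edges p)) \<subseteq> {..<2}" using edges col by auto
  then have "length (map c (path_edges p)) \<le> 2"
    using dc distinct_card card_mono[OF finite_lessThan] by (metis card_lessThan)
  then have "length p \<le> 3" by (simp add: path_edges_def)
  then consider a where "p = [a]" | a b where "p = [a, b]" | a b x where "p = [a, b, x]"
    using ne by (cases p rule: remdups_adj.cases; cases "tl (tl p)") auto
  then show ?thesis
  proof cases
    case 1 then show ?thesis using hd last uv by simp
  next
    case (2 a b)
    then show ?thesis using edges hd last by (simp add: path_edges_def)
  next
    case (3 a b x)
    then have "path_edges p = [{a, b}, {b, x}]" by (simp add: path_edges_def upt_rec)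
    then show ?thesis using edges dc hd last 3 by auto
  qed
qed

lemma rainbow_connected_two_imp_diameter_two:
  assumes "rainbow_connected 2 V E"
  obtains c :: "'a set \<Rightarrow> nat" where "c ` E \<subseteq> {..<2}" "rainbow_diameter_two V E c"
proof -
  obtain c :: "'a set \<Rightarrow> nat" where col: "c ` E \<subseteq> {..<2}"
    and rp: "\<forall>u\<in>V. \<forall>v\<in>V. u \<noteq> v \<longrightarrow> (\<exists>p. rainbow_path E c p u v)"
    using assms by (auto simp: rainbow_connected_def)
  have "rainbow_diameter_two V E c"
    unfolding rainbow_diameter_two_def using rp rainbow_path_two_colours[OF _ col] by metis
  with col that show ?thesis by blast
qed

text \<open>A common neighbour w of two vertices with the same colour pattern cannot lie in H:
  the colours of both edges at w are then determined by whether w \<in> T, so they agree.\<close>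

lemma colour_pattern_subset_ball2:
  assumes Esub: "\<forall>e\<in>E. e \<subseteq> V" and col: "c ` E \<subseteq> {..<2}" and diam: "rainbow_diameter_two V E c"
    and LV: "L \<subseteq> V" and v: "v \<in> L" "colour_pattern E c (V - L) v T"
  shows "{u\<in>L. colour_pattern E c (V - L) u T}
           \<subseteq> insert v (nbrs E L v \<union> (\<Union>w\<in>nbrs E L v. nbrs E L w))"
proof
  fix u assume u: "u \<in> {u\<in>L. colour_pattern E c (V - L) u T}"
  show "u \<in> insert v (nbrs E L v \<union> (\<Union>w\<in>nbrs E L v. nbrs E L w))"
  proof (cases "u = v \<or> {v, u} \<in> E")
    case True then show ?thesis using u by (auto simp: nbrs_def)
  next
    case False
    have "v \<in> V" "u \<in> V" "u \<noteq> v" using v u LV False by auto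
    then obtain w where vw: "{v, w} \<in> E" and wu: "{w, u} \<in> E" and cw: "c {v, w} \<noteq> c {w, u}"
      using diam False unfolding rainbow_diameter_two_def by metis
    have uw: "{u, w} \<in> E" and cw': "c {v, w} \<noteq> c {u, w}"
      using wu cw by (simp_all add: insert_commute)
    have "w \<notin> V - L"
    proof
      assume "w \<in> V - L"
      then have "c {v, w} = 0 \<longleftrightarrow> c {u, w} = 0"
        using v u vw uw by (auto simp: colour_pattern_def nbrs_def)
      moreover have "c {v, w} < 2" "c {u, w} < 2" using col vw uw by auto
      ultimately show False using cw' by presburger
    qed
    then have "w \<in> L" using Esub vw by auto
    then show ?thesis using u vw wu by (auto simp: nbrs_def)
  qed
qed

lemma card_colour_pattern_le:
  assumes "finite L" "\<forall>e\<in>E. e \<subseteq> V" "c ` E \<subseteq> {..<2}" "rainbow_diameter_two V E c" "L \<subseteq> V"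
    and deg: "\<And>x. x \<in> L \<Longrightarrow> real (card (nbrs E L x)) \<le> K"
  shows "real (card {u\<in>L. colour_pattern E c (V - L) u T}) \<le> 1 + K + K\<^sup>2"
proof (cases "\<exists>v\<in>L. colour_pattern E c (V - L) v T")
  case True
  then obtain v where v: "v \<in> L" "colour_pattern E c (V - L) v T" by blast
  have "card {u\<in>L. colour_pattern E c (V - L) u T}
      \<le> card (insert v (nbrs E L v \<union> (\<Union>w\<in>nbrs E L v. nbrs E L w)))"
    using colour_pattern_subset_ball2[OF assms(2-5) v] assms(1)
    by (intro card_mono) (auto simp: nbrs_def)
  then show ?thesis using card_ball2_le[OF assms(1) v(1) deg] by linarith
next
  case False
  then have "{u\<in>L. colour_pattern E c (V - L) u T} = {}" by auto
  moreover have "0 \<le> (K + 1/2)\<^sup>2 + 3/4" by simp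
  ultimately show ?thesis by (simp only: card.empty of_nat_0) (simp add: power2_eq_square algebra_simps)
qed

lemma sum_powr_card_nbrs_le:
  fixes c :: "'a set \<Rightarrow> nat"
  assumes finV: "finite V" and Esub: "\<forall>e\<in>E. e \<subseteq> V" and col: "c ` E \<subseteq> {..<2}"
    and diam: "rainbow_diameter_two V E c" and LV: "L \<subseteq> V"
    and deg: "\<And>x. x \<in> L \<Longrightarrow> real (card (nbrs E L x)) \<le> K"
  shows "(\<Sum>v\<in>L. 2 powr - real (card (nbrs E (V - L) v))) \<le> 1 + K + K\<^sup>2"
proof -
  define H where "H = V - L"
  define h where "h = card H"
  have finL: "finite L" and finH: "finite H" using finV LV by (auto simp: H_def finite_subset)
  have "card {T\<in>Pow H. colour_pattern E c H v T} = 2 ^ (h - card (nbrs E H v))" for v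
    unfolding colour_pattern_def h_def
    by (rule card_Pow_prescribed_on) (use finH in \<open>auto simp: nbrs_def\<close>)
  then have "(\<Sum>v\<in>L. real (2 ^ (h - card (nbrs E H v))))
      = real (\<Sum>v\<in>L. card {T\<in>Pow H. colour_pattern E c H v T})"
    by simp
  also have "\<dots> = real (\<Sum>T\<in>Pow H. card {v\<in>L. colour_pattern E c H v T})"
    using sum_card_filter_swap[OF finL, of "Pow H"] finH by simp
  also have "\<dots> = (\<Sum>T\<in>Pow H. real (card {v\<in>L. colour_pattern E c H v T}))"
    by simp
  also have "\<dots> \<le> (\<Sum>T\<in>Pow H. 1 + K + K\<^sup>2)"
    using card_colour_pattern_le[OF finL Esub col diam LV deg] by (intro sum_mono) (simp add: H_def)
  also have "\<dots> = 2 ^ h * (1 + K + K\<^sup>2)" using finH by (simp add: card_Pow h_def)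
  finally have main: "(\<Sum>v\<in>L. real (2 ^ (h - card (nbrs E H v)))) \<le> 2 ^ h * (1 + K + K\<^sup>2)" .
  have "2 powr - real (card (nbrs E H v)) = real (2 ^ (h - card (nbrs E H v))) / 2 ^ h" for v
  proof -
    have "card (nbrs E H v) \<le> h" unfolding h_def using finH by (intro card_mono) (auto simp: nbrs_def)
    then have "(2::real) ^ h = 2 ^ (h - card (nbrs E H v)) * 2 ^ card (nbrs E H v)"
      by (simp add: power_add[symmetric])
    then show ?thesis by (simp add: powr_minus powr_realpow divide_simps)
  qed
  then have "(\<Sum>v\<in>L. 2 powr - real (card (nbrs E H v)))
      = (\<Sum>v\<in>L. real (2 ^ (h - card (nbrs E H v)))) / 2 ^ h"
    by (simp add: sum_divide_distrib)
  also have "\<dots> \<le> 1 + K + K\<^sup>2" using main by (simp add: divide_simps mult.commute)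
  finally show ?thesis by (simp add: H_def)
qed

text \<open>Tangent line to the convex function 2^(-x) at the point a with 2^(-a) = M / |L|.\<close>

lemma card_mult_log_le_sum:
  fixes x :: "'a \<Rightarrow> real"
  assumes fin: "finite L" and ne: "L \<noteq> {}" and M: "M > 0"
    and S: "(\<Sum>v\<in>L. 2 powr - x v) \<le> M"
  shows "real (card L) * log 2 (real (card L) / M) \<le> (\<Sum>v\<in>L. x v)"
proof -
  define l where "l = real (card L)"
  define a where "a = log 2 (l / M)"
  have l: "l > 0" using fin ne by (simp add: l_def card_gt_0_iff)
  have pa: "2 powr - a = M / l" using l M by (simp add: a_def powr_minus_divide)
  have tangent: "2 powr - a * (1 - ln 2 * (x v - a)) \<le> 2 powr - x v" for v
  proof -
    have "2 powr - x v = 2 powr - a * exp (- ln 2 * (x v - a))"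
      by (simp add: powr_def exp_add[symmetric] algebra_simps)
    then show ?thesis
      using exp_ge_add_one_self[of "- ln 2 * (x v - a)"] by (simp add: mult_left_mono)
  qed
  have "M / l * (l - ln 2 * ((\<Sum>v\<in>L. x v) - l * a))
      = (\<Sum>v\<in>L. 2 powr - a * (1 - ln 2 * (x v - a)))"
    by (simp add: pa sum_distrib_left[symmetric] sum_subtractf sum_distrib_left sum_distrib_right
        l_def algebra_simps)
  also have "\<dots> \<le> (\<Sum>v\<in>L. 2 powr - x v)" by (intro sum_mono tangent)
  also have "\<dots> \<le> M" by (rule S)
  finally have "0 \<le> M / l * ln 2 * ((\<Sum>v\<in>L. x v) - l * a)"
    using l by (simp add: field_simps)
  moreover have "M / l * ln 2 > 0" using M l by simp
  ultimately have "0 \<le> (\<Sum>v\<in>L. x v) - l * a"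
    by (metis mult_le_cancel_left_pos mult_zero_right)
  then show ?thesis by (simp add: l_def a_def)
qed

lemma log2_three_fifths_le: "log 2 (3/5 :: real) \<le> - 2/3"
proof -
  have "3 * log 2 (3/5::real) = log 2 ((3/5)^3)" by (simp add: log_nat_power)
  also have "\<dots> \<le> log 2 (1/4)" by (subst log_le_cancel_iff) (auto simp: power3_eq_cube)
  also have "\<dots> = -2" using log_pow_cancel[of "2::real" 2] by (simp add: log_divide)
  finally show ?thesis by simp
qed

lemma log2_degree_bound_le:
  fixes m :: real
  assumes m: "m \<ge> 64"
  shows "log 2 (1 + 3/4 * m\<^sup>2 + (3/4 * m\<^sup>2)\<^sup>2) \<le> log 2 (1 - 8 / (3 * m)) + 4 * log 2 m - 2/3"
proof -
  have q: "1 - 8 / (3 * m) > 0" using m by (simp add: field_simps)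
  have "m^3 \<ge> 64 * m^2" "m^4 \<ge> 64 * m^3"
    using m mult_right_mono[OF m, of "m^2"] mult_right_mono[OF m, of "m^3"]
    by (simp_all add: eval_nat_numeral algebra_simps)
  moreover have "m^2 \<ge> 1" by (rule one_le_power) (use m in simp)
  moreover have "3/5 * ((1 - 8 / (3 * m)) * m^4) = 3/5 * m^4 - 8/5 * m^3"
    using m by (simp add: field_simps eval_nat_numeral)
  moreover have "(3/4 * m\<^sup>2)\<^sup>2 = 9/16 * m^4" by (simp add: eval_nat_numeral)
  ultimately have "1 + 3/4 * m\<^sup>2 + (3/4 * m\<^sup>2)\<^sup>2 \<le> 3/5 * ((1 - 8 / (3 * m)) * m^4)"
    by linarith
  then have "log 2 (1 + 3/4 * m\<^sup>2 + (3/4 * m\<^sup>2)\<^sup>2) \<le> log 2 (3/5 * ((1 - 8 / (3 * m)) * m^4))"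
    using add_pos_nonneg[of 1 "3/4 * m\<^sup>2 + (3/4 * m\<^sup>2)\<^sup>2"]
    by (subst log_le_cancel_iff) (auto simp: add.assoc)
  also have "\<dots> = log 2 (3/5) + log 2 (1 - 8 / (3 * m)) + 4 * log 2 m"
    using q m log_mult[of 2 "3/5" "(1 - 8 / (3 * m)) * m^4"] log_mult[of 2 "1 - 8 / (3 * m)" "m^4"]
    by (simp add: log_nat_power)
  finally show ?thesis using log2_three_fifths_le by linarith
qed

lemma mult_log_mono:
  fixes a b :: real
  assumes "1 \<le> a" "a \<le> b"
  shows "a * log 2 a \<le> b * log 2 b"
  using assms by (intro mult_mono) auto

lemma log2_ge_64:
  fixes n :: real
  assumes "2^64 \<le> n"
  shows "64 \<le> log 2 n"
proof -
  have "log 2 ((2::real)^64) \<le> log 2 n" using assms by (subst log_le_cancel_iff) auto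
  moreover have "log 2 ((2::real)^64) = 64" using log_pow_cancel[of "2::real" 64] by simp
  ultimately show ?thesis by simp
qed

lemma mult_log_div_lower_bound:
  fixes n l :: real
  defines "m \<equiv> log 2 n"
  defines "K \<equiv> 3/4 * m\<^sup>2"
  assumes n: "2^64 \<le> n" and l: "n * (1 - 8 / (3 * m)) \<le> l" "l \<le> n"
  shows "n * m - 4 * n * log 2 m - 2 * n \<le> l * log 2 (l / (1 + K + K\<^sup>2))"
proof -
  define q where "q = 1 - 8 / (3 * m)"
  have m: "m \<ge> 64" unfolding m_def using n by (rule log2_ge_64)
  have q: "1/2 \<le> q" "q \<le> 1" using m by (simp_all add: q_def field_simps)
  have npos: "n > 0" using n by (smt (verit) zero_less_power)
  have "n / 2 \<le> n * q" using mult_left_mono[OF q(1), of n] npos by simp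
  moreover have "(2::real) \<le> 2^64" by simp
  ultimately have nq: "1 \<le> n * q" using n by linarith
  have M: "1 \<le> 1 + K + K\<^sup>2" by (simp add: K_def)
  have "n * m - 8 * n / 3 + n * log 2 q \<le> n * q * log 2 (n * q)"
  proof -
    have "log 2 (n * q) = m + log 2 q" using npos q by (simp add: log_mult m_def)
    then have "n * q * log 2 (n * q) = n * q * m + n * (q * log 2 q)" by (simp add: algebra_simps)
    moreover have "n * q * m = n * m - 8 * n / 3" using m by (simp add: q_def field_simps)
    moreover have "log 2 q \<le> q * log 2 q"
      using q mult_right_mono_neg[of q 1 "log 2 q"] by simp
    then have "n * log 2 q \<le> n * (q * log 2 q)" using npos by (simp add: mult_left_mono)
    ultimately show ?thesis by linarith
  qed
  also have "\<dots> \<le> l * log 2 l"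
    using nq l(1) by (intro mult_log_mono) (simp_all add: q_def)
  finally have "n * m - 8 * n / 3 + n * log 2 q \<le> l * log 2 l" .
  moreover have "l * log 2 (1 + K + K\<^sup>2) \<le> n * (log 2 q + 4 * log 2 m - 2/3)"
  proof -
    have "l * log 2 (1 + K + K\<^sup>2) \<le> n * log 2 (1 + K + K\<^sup>2)"
      using l(2) M by (simp add: mult_right_mono)
    also have "\<dots> \<le> n * (log 2 q + 4 * log 2 m - 2/3)"
      using log2_degree_bound_le[OF m] npos by (simp add: K_def q_def mult_left_mono)
    finally show ?thesis .
  qed
  moreover have "l * log 2 (l / (1 + K + K\<^sup>2)) = l * log 2 l - l * log 2 (1 + K + K\<^sup>2)"
    using l(1) nq M by (simp add: q_def log_divide algebra_simps)
  ultimately show ?thesis by (simp add: algebra_simps)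
qed

lemma edge_count_estimate:
  fixes n e h :: real
  defines "m \<equiv> log 2 n"
  defines "K \<equiv> 3/4 * m\<^sup>2"
  assumes n: "2^64 \<le> n" and h: "0 \<le> h" "h \<le> n"
    and high: "h * K \<le> 2 * e"
    and low: "n - h > 0 \<Longrightarrow> (n - h) * log 2 ((n - h) / (1 + K + K\<^sup>2)) \<le> e"
  shows "n * m - 4 * n * log 2 m - 2 * n \<le> e"
proof -
  have m: "m \<ge> 64" unfolding m_def using n by (rule log2_ge_64)
  have npos: "n > 0" using n by (smt (verit) zero_less_power)
  show ?thesis
  proof (cases "2 * n * m \<le> h * K")
    case True
    have "0 \<le> n * log 2 m" using npos m by simp
    then show ?thesis using True high npos by linarith
  next
    case False
    then have "h < 8 * n / (3 * m)" using m by (simp add: K_def field_simps power2_eq_square)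
    then have l: "n * (1 - 8 / (3 * m)) \<le> n - h" using m by (simp add: field_simps)
    moreover have "0 < n * (1 - 8 / (3 * m))" using m npos by (simp add: field_simps)
    ultimately show ?thesis
      using mult_log_div_lower_bound[OF n, of "n - h"] low h
      by (simp add: m_def K_def)
  qed
qed

lemma card_edges_lower_bound:
  fixes V :: "'a::linorder set"
  defines "n \<equiv> card V"
  assumes n: "2^64 \<le> n" and sg: "simple_graph V E" and rc: "rainbow_connected 2 V E"
  shows "real n * log 2 (real n) - 4 * real n * log 2 (log 2 (real n)) - 2 * real n \<le> real (card E)"
proof -
  define K where "K = 3/4 * (log 2 (real n))\<^sup>2"
  define L where "L = {v\<in>V. real (card (nbrs E V v)) \<le> K}"
  define H where "H = V - L"
  obtain c :: "'a set \<Rightarrow> nat" where col: "c ` E \<subseteq> {..<2}" and diam: "rainbow_diameter_two V E c"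
    using rainbow_connected_two_imp_diameter_two rc by blast
  have finV: "finite V" and Esub: "\<forall>e\<in>E. e \<subseteq> V" and LV: "L \<subseteq> V"
    using sg by (auto simp: simple_graph_def L_def)
  have finE: "finite E" using Esub finV by (meson PowI finite_Pow_iff finite_subset subsetI)
  have finL: "finite L" and finH: "finite H" using finV by (auto simp: L_def H_def)
  have cardLH: "real (card H) = real n - real (card L)" "card L \<le> n"
    using card_mono[OF finV LV] card_Diff_subset[OF finite_subset[OF LV finV] LV]
    by (simp_all add: H_def n_def of_nat_diff)
  have high: "real (card H) * K \<le> 2 * real (card E)"
    by (rule card_mult_le_twice_card_edges[OF finH finV finE]) (auto simp: H_def L_def)
  have deg: "real (card (nbrs E L x)) \<le> K" if "x \<in> L" for x
  proof -
    have "card (nbrs E L x) \<le> card (nbrs E V x)"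
      using LV finV by (intro card_mono) (auto simp: nbrs_def)
    then show ?thesis using that by (simp add: L_def)
  qed
  have low: "real (card L) * log 2 (real (card L) / (1 + K + K\<^sup>2)) \<le> real (card E)"
    if "card L > 0"
  proof -
    have "(\<Sum>v\<in>L. 2 powr - real (card (nbrs E H v))) \<le> 1 + K + K\<^sup>2"
      unfolding H_def by (rule sum_powr_card_nbrs_le[OF finV Esub col diam LV deg])
    moreover have "0 < 1 + K + K\<^sup>2" by (simp add: K_def add_pos_nonneg)
    ultimately have "real (card L) * log 2 (real (card L) / (1 + K + K\<^sup>2))
        \<le> (\<Sum>v\<in>L. real (card (nbrs E H v)))"
      using that by (intro card_mult_log_le_sum[OF finL]) auto
    also have "\<dots> \<le> real (card E)"
      using sum_card_nbrs_le_card_edges[OF finL finH _ finE] by (simp add: H_def flip: of_nat_sum)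
    finally show ?thesis .
  qed
  show ?thesis
  proof (rule edge_count_estimate[of "real n" "real (card H)"])
    show "real (card H) * (3/4 * (log 2 (real n))\<^sup>2) \<le> 2 * real (card E)"
      using high by (simp add: K_def)
    assume "0 < real n - real (card H)"
    then show "(real n - real (card H)) * log 2 ((real n - real (card H)) /
        (1 + 3/4 * (log 2 (real n))\<^sup>2 + (3/4 * (log 2 (real n))\<^sup>2)\<^sup>2)) \<le> real (card E)"
      using low cardLH by (simp add: K_def)
  qed (use n cardLH in auto)
qed

lemma rainbow_connected_complete_graph:
  assumes "0 < d"
  shows "rainbow_connected d V {e. e \<subseteq> V \<and> card e = 2}"
  unfolding rainbow_connected_def
proof (intro exI[where x="\<lambda>_. 0"] conjI ballI impI)
  fix u v assume "u \<in> V" "v \<in> V" "u \<noteq> v"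
  then show "\<exists>p. rainbow_path {e. e \<subseteq> V \<and> card e = 2} (\<lambda>_. 0) p u v"
    by (intro exI[where x="[u, v]"]) (auto simp: rainbow_path_def path_edges_def)
qed (use assms in auto)

lemma t_attained:
  "\<exists>E. simple_graph {0..<n} E \<and> rainbow_connected 2 {0..<n} E \<and> t n 2 = card E"
proof -
  let ?G = "{E. simple_graph {0..<n} E \<and> rainbow_connected 2 {0..<n} E}"
  have "?G \<subseteq> Pow (Pow {0..<n})" by (auto simp: simple_graph_def)
  then have "finite (card ` ?G)" by (meson finite_Pow_iff finite_atLeastLessThan finite_imageI finite_subset)
  moreover have "{e. e \<subseteq> {0..<n} \<and> card e = 2} \<in> ?G"
    using rainbow_connected_complete_graph[of 2] by (auto simp: simple_graph_def)
  ultimately have "Min (card ` ?G) \<in> card ` ?G" by (intro Min_in) auto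
  then show ?thesis by (auto simp: t_def setcompr_eq_image)
qed

theorem proposition1:
  shows "\<exists>N::nat. \<forall>n\<ge>N.
    real (t n 2) \<ge> real n * log 2 (real n) - 4 * real n * log 2 (log 2 (real n)) - 2 * real n"
proof (intro exI allI impI)
  fix n :: nat assume "2^64 \<le> n"
  then show "real (t n 2) \<ge> real n * log 2 (real n) - 4 * real n * log 2 (log 2 (real n)) - 2 * real n"
    using t_attained[of n] card_edges_lower_bound[of "{0..<n}"] by auto
qed

end
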